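(* Let $S:\mathbb{R}^m\times\mathbb{R}^n\to\mathbb{R}^q$ be a bilinear map with lifted linear operator $\mathscr{S}$, let $\mathcal{K}\subseteq\mathbb{R}^m\times\mathbb{R}^n$ be nonempty, and let $\mathcal{K}'\subseteq\mathbb{R}^{m\times n}$ be any set satisfying $\mathcal{K}'\cap\{W:\operatorname{rank}(W)\le 1\}=\{xy^T:(x,y)\in\mathcal{K}\}$. For $z\in\mathbb{R}^q$ let $\mathcal{K}_{\mathrm{opt}}(z)$ be the set of solutions of "find $(x,y)\in\mathcal{K}$ with $S(x,y)=z$" and $\mathcal{K}'_{\mathrm{opt}}(z)$ the set of minimizers of "minimize $\operatorname{rank}(W)$ subject to $\mathscr{S}(W)=z$, $W\in\mathcal{K}'$". Then $\mathcal{K}'_{\mathrm{opt}}(z)=\{xy^T:(x,y)\in\mathcal{K}_{\mathrm{opt}}(z)\}$ holds for every $z\in\{S(x,y):(x,y)\in\mathcal{K}\}$ if and only if it is not the case that $\{0\}\subsetneq\mathcal{K}'\cap\mathcal{N}(\mathscr{S},1)$.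
   Context: A map is bilinear if linear in each argument separately. For $j=1,\dots,q$ let $S_j\in\mathbb{R}^{m\times n}$ be the unique matrix with $(S(x,y))_j=x^TS_jy$; the lifted operator $\mathscr{S}:\mathbb{R}^{m\times n}\to\mathbb{R}^q$ is $(\mathscr{S}(W))_j=\operatorname{tr}(S_j^TW)$, so $\mathscr{S}(xy^T)=S(x,y)$. For $k\ge1$, $\mathcal{N}(\mathscr{S},k)=\{X\in\mathbb{R}^{m\times n}:\operatorname{rank}(X)\le k,\ \mathscr{S}(X)=0\}$. *)

theory Defs
  imports "HOL-Analysis.Analysis"
begin

definition outer :: "real^'m \<Rightarrow> real^'n \<Rightarrow> real^'n^'m" where
  "outer x y = (\<chi> i j. x $ i * y $ j)"

text \<open>The matrix S_j with (S(x,y))_j = x^T S_j y: entries (S_j)_{ik} = (S(e_i,e_k))_j.\<close>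
definition coeff_mat :: "(real^'m \<Rightarrow> real^'n \<Rightarrow> real^'q) \<Rightarrow> 'q \<Rightarrow> real^'n^'m" where
  "coeff_mat S j = (\<chi> i k. S (axis i 1) (axis k 1) $ j)"

definition lift :: "(real^'m \<Rightarrow> real^'n \<Rightarrow> real^'q) \<Rightarrow> real^'n^'m \<Rightarrow> real^'q" where
  "lift S W = (\<chi> j. trace (transpose (coeff_mat S j) ** W))"

definition nullset :: "(real^'m \<Rightarrow> real^'n \<Rightarrow> real^'q) \<Rightarrow> nat \<Rightarrow> (real^'n^'m) set" where
  "nullset S k = {X. rank X \<le> k \<and> lift S X = 0}"

definition Kopt :: "(real^'m \<Rightarrow> real^'n \<Rightarrow> real^'q) \<Rightarrow> ((real^'m) \<times> (real^'n)) set \<Rightarrow> real^'q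
    \<Rightarrow> ((real^'m) \<times> (real^'n)) set" where
  "Kopt S K z = {(x, y). (x, y) \<in> K \<and> S x y = z}"

definition Kopt' :: "(real^'m \<Rightarrow> real^'n \<Rightarrow> real^'q) \<Rightarrow> (real^'n^'m) set \<Rightarrow> real^'q
    \<Rightarrow> (real^'n^'m) set" where
  "Kopt' S K' z = {W. W \<in> K' \<and> lift S W = z \<and>
      (\<forall>W'. W' \<in> K' \<and> lift S W' = z \<longrightarrow> rank W \<le> rank W')}"

end

theory Submission
  imports Defs
begin

text \<open>A rank-one matrix lies in \<open>K'\<close> only as a lifted point of \<open>K\<close>, and the lifted operator
  agrees with \<open>S\<close> on such points. Hence, whenever \<open>z\<close> is attained on \<open>K\<close>, a rank-minimizer
  for \<open>z\<close> has rank at most one and comes from a solution in \<open>K\<close>. Conversely every lifted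
  solution has rank at most one, so it fails to be a minimizer only if a rank-zero competitor
  exists, i.e. \<open>z = 0\<close> with \<open>0 \<in> K'\<close>; this obstruction occurs exactly when \<open>K'\<close> contains
  both \<open>0\<close> and a nonzero rank-one matrix annihilated by the lifted operator.\<close>

lemma lift_outer:
  assumes "bilinear S"
  shows "lift S (outer x y) = S x y"
proof -
  have "S x y = S (\<Sum>i\<in>UNIV. x$i *s axis i 1) (\<Sum>k\<in>UNIV. y$k *s axis k 1)"
    by (simp add: basis_expansion)
  also have "\<dots> = (\<Sum>(i,k)\<in>UNIV \<times> UNIV. S (x$i *s axis i 1) (y$k *s axis k 1))"
    by (rule bilinear_sum[OF assms])
  also have "\<dots> = (\<Sum>(i,k)\<in>UNIV \<times> UNIV. (x$i * y$k) *\<^sub>R S (axis i 1) (axis k 1))"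
    by (simp add: scalar_mult_eq_scaleR bilinear_lmul[OF assms] bilinear_rmul[OF assms] mult.commute)
  also have "\<dots> = (\<Sum>i\<in>UNIV. \<Sum>k\<in>UNIV. (x$i * y$k) *\<^sub>R S (axis i 1) (axis k 1))"
    by (rule sum.cartesian_product[symmetric])
  finally have expansion: "S x y = \<dots>" .
  show ?thesis
    unfolding expansion lift_def
    apply (simp add: vec_eq_iff trace_def matrix_matrix_mult_def transpose_def coeff_mat_def
        outer_def sum_component)
    apply (subst sum.swap)
    apply (simp add: ac_simps)
    done
qed

lemma lift_zero [simp]: "lift S 0 = 0"
  by (simp add: lift_def trace_def matrix_matrix_mult_def vec_eq_iff)

lemma rank_one_outer_in:
  assumes "K' \<inter> {W. rank W \<le> 1} = (\<lambda>(x, y). outer x y) ` K" and "(x, y) \<in> K"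
  shows "outer x y \<in> K'" and "rank (outer x y) \<le> 1"
proof -
  have "outer x y \<in> (\<lambda>(x, y). outer x y) ` K"
    using assms(2) by (rule rev_image_eqI) simp
  then show "outer x y \<in> K'" and "rank (outer x y) \<le> 1"
    unfolding assms(1)[symmetric] by auto
qed

lemma Kopt'_subset_outer_Kopt:
  assumes "bilinear S"
    and rank_one: "K' \<inter> {W. rank W \<le> 1} = (\<lambda>(x, y). outer x y) ` K"
    and "(x0, y0) \<in> K"
  shows "Kopt' S K' (S x0 y0) \<subseteq> (\<lambda>(x, y). outer x y) ` Kopt S K (S x0 y0)"
proof
  fix W assume W: "W \<in> Kopt' S K' (S x0 y0)"
  then have "rank W \<le> rank (outer x0 y0)"
    using rank_one_outer_in[OF rank_one assms(3)] lift_outer[OF assms(1)]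
    unfolding Kopt'_def by blast
  also have "\<dots> \<le> 1"
    by (rule rank_one_outer_in[OF rank_one assms(3)])
  finally have "W \<in> (\<lambda>(x, y). outer x y) ` K"
    using W unfolding rank_one[symmetric] Kopt'_def by blast
  then obtain x y where xy: "(x, y) \<in> K" "W = outer x y"
    by auto
  with W have "S x y = S x0 y0"
    using lift_outer[OF assms(1)] unfolding Kopt'_def by simp
  with xy show "W \<in> (\<lambda>(x, y). outer x y) ` Kopt S K (S x0 y0)"
    unfolding Kopt_def by force
qed

lemma outer_Kopt_subset_Kopt':
  assumes "bilinear S"
    and rank_one: "K' \<inter> {W. rank W \<le> 1} = (\<lambda>(x, y). outer x y) ` K"
    and no_null: "\<not> ({0} \<subset> K' \<inter> nullset S 1)"
  shows "(\<lambda>(x, y). outer x y) ` Kopt S K z \<subseteq> Kopt' S K' z"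
proof
  fix W assume "W \<in> (\<lambda>(x, y). outer x y) ` Kopt S K z"
  then obtain x y where xy: "(x, y) \<in> K" "S x y = z" "W = outer x y"
    unfolding Kopt_def by auto
  have W: "W \<in> K'" "rank W \<le> 1" "lift S W = z"
    using rank_one_outer_in[OF rank_one xy(1)] lift_outer[OF assms(1)] xy(2,3) by simp_all
  have "rank W \<le> rank W'" if W': "W' \<in> K'" "lift S W' = z" for W'
  proof (cases "W' = 0")
    case True
    then have "W \<in> K' \<inter> nullset S 1" "0 \<in> K' \<inter> nullset S 1"
      using W W' unfolding nullset_def by auto
    then have "W = 0" using no_null by blast
    then show ?thesis by simp
  next
    case False
    then have "1 \<le> rank W'"
      using rank_eq_0[of W'] by simp
    with W(2) show ?thesis by simp
  qed
  with W show "W \<in> Kopt' S K' z"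
    unfolding Kopt'_def by blast
qed

lemma nonzero_null_not_in_Kopt':
  assumes "0 \<in> K'" and "W \<in> nullset S k" and "W \<noteq> 0"
  shows "W \<notin> Kopt' S K' 0"
proof
  assume "W \<in> Kopt' S K' 0"
  then have "rank W \<le> rank (0 :: real^'n^'m)"
    using assms(1) unfolding Kopt'_def by auto
  with assms(3) show False
    using rank_eq_0[of W] by simp
qed

theorem corollary1:
  fixes S :: "real^'m \<Rightarrow> real^'n \<Rightarrow> real^'q"
    and K :: "((real^'m) \<times> (real^'n)) set"
    and K' :: "(real^'n^'m) set"
  assumes "bilinear S"
    and "K \<noteq> {}"
    and "K' \<inter> {W. rank W \<le> 1} = (\<lambda>(x, y). outer x y) ` K"
  shows "(\<forall>z \<in> (\<lambda>(x, y). S x y) ` K. Kopt' S K' z = (\<lambda>(x, y). outer x y) ` Kopt S K z)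
         \<longleftrightarrow> \<not> ({0} \<subset> K' \<inter> nullset S 1)"
proof
  assume lifted: "\<forall>z \<in> (\<lambda>(x, y). S x y) ` K. Kopt' S K' z = (\<lambda>(x, y). outer x y) ` Kopt S K z"
  show "\<not> ({0} \<subset> K' \<inter> nullset S 1)"
  proof
    assume "{0} \<subset> K' \<inter> nullset S 1"
    then obtain W where W: "W \<in> K'" "W \<in> nullset S 1" "W \<noteq> 0" and "0 \<in> K'"
      by blast
    then have "W \<in> (\<lambda>(x, y). outer x y) ` K"
      unfolding assms(3)[symmetric] nullset_def by blast
    then obtain x y where xy: "(x, y) \<in> K" "W = outer x y"
      by auto
    with W have "S x y = 0"
      using lift_outer[OF assms(1)] unfolding nullset_def by simp
    with xy lifted have "W \<in> Kopt' S K' 0"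
      unfolding Kopt_def by force
    with nonzero_null_not_in_Kopt'[OF \<open>0 \<in> K'\<close> W(2,3)] show False ..
  qed
next
  assume no_null: "\<not> ({0} \<subset> K' \<inter> nullset S 1)"
  show "\<forall>z \<in> (\<lambda>(x, y). S x y) ` K. Kopt' S K' z = (\<lambda>(x, y). outer x y) ` Kopt S K z"
  proof
    fix z assume "z \<in> (\<lambda>(x, y). S x y) ` K"
    then obtain x y where xy: "(x, y) \<in> K" and z: "z = S x y"
      by auto
    show "Kopt' S K' z = (\<lambda>(x, y). outer x y) ` Kopt S K z"
      unfolding z
      using Kopt'_subset_outer_Kopt[OF assms(1,3) xy] outer_Kopt_subset_Kopt'[OF assms(1,3) no_null]
      by (rule subset_antisym)
  qed
qed

end
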